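(* For every $n\ge1$ there is a one-to-one correspondence between the set of linked partitions of $[n]$ and the set of increasing trees on the $n+1$ labeled vertices $0,1,\dots,n$.
   Context: Two finite sets of integers $E,F$ are nearly disjoint if for every $i\in E\cap F$ either ($i=\min(E)$, $|E|>1$, $i\ne\min(F)$) or ($i=\min(F)$, $|F|>1$, $i\ne\min(E)$). A linked partition of $[n]$ is a set of nonempty subsets (blocks) of $[n]$ with union $[n]$, any two distinct blocks nearly disjoint (no noncrossing condition). An increasing tree on vertices $0,1,\dots,n$ is a tree rooted at $0$ in which every child has a larger label than its parent. *)

theory Defs
  imports Main
begin

definition nearly_disjoint :: "nat set \<Rightarrow> nat set \<Rightarrow> bool" where
  "nearly_disjoint E F \<longleftrightarrow>
     (\<forall>i \<in> E \<inter> F.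
        (i = Min E \<and> card E > 1 \<and> i \<noteq> Min F) \<or>
        (i = Min F \<and> card F > 1 \<and> i \<noteq> Min E))"

definition linked_partitions :: "nat \<Rightarrow> nat set set set" where
  "linked_partitions n = {P. (\<forall>B\<in>P. B \<noteq> {} \<and> B \<subseteq> {1..n}) \<and> \<Union>P = {1..n} \<and>
       (\<forall>E\<in>P. \<forall>F\<in>P. E \<noteq> F \<longrightarrow> nearly_disjoint E F)}"

definition rooted_tree :: "nat set \<Rightarrow> nat \<Rightarrow> (nat \<times> nat) set \<Rightarrow> bool" where
  "rooted_tree V r T \<longleftrightarrow> r \<in> V \<and> T \<subseteq> V \<times> V \<and>
     (\<forall>p. (p, r) \<notin> T) \<and>
     (\<forall>c\<in>V - {r}. \<exists>!p. (p, c) \<in> T) \<and>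
     (\<forall>v\<in>V. (r, v) \<in> T\<^sup>*)"

definition increasing_trees :: "nat \<Rightarrow> (nat \<times> nat) set set" where
  "increasing_trees n = {T. rooted_tree {0..n} 0 T \<and> (\<forall>(p, c)\<in>T. p < c)}"

end

theory Submission
  imports Defs
begin

text \<open>In a linked partition every element is the minimum of at most one block and a non-minimal
  element of at most one block. So one may hang the other elements of each block below its
  minimum, and every element that is non-minimal in no block below the root 0; the resulting
  graph is an increasing tree. Conversely, the blocks are recovered from an increasing tree as
  the sets \<open>{v} \<union> T `` {v}\<close> for the vertices v that have children or whose parent
  is the root.\<close>

lemma nearly_disjoint_common_elem:
  assumes "nearly_disjoint E F" "i \<in> E" "i \<in> F"
  shows "i = Min E \<longleftrightarrow> i \<noteq> Min F"
  using assms unfolding nearly_disjoint_def by blast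

lemma nearly_disjoint_singleton:
  assumes "nearly_disjoint {x} F"
  shows "x \<notin> F"
  using assms unfolding nearly_disjoint_def by auto

lemma linked_partition_block:
  assumes "P \<in> linked_partitions n" "B \<in> P"
  shows "finite B" "B \<subseteq> {1..n}" "Min B \<in> B" "Min B \<noteq> 0"
proof -
  show "B \<subseteq> {1..n}" using assms unfolding linked_partitions_def by blast
  then show "finite B" by (rule finite_subset) simp
  moreover have "B \<noteq> {}" using assms unfolding linked_partitions_def by blast
  ultimately show "Min B \<in> B" by (rule Min_in)
  with \<open>B \<subseteq> {1..n}\<close> show "Min B \<noteq> 0" by fastforce
qed

lemma linked_partition_nearly_disjoint:
  assumes "P \<in> linked_partitions n" "E \<in> P" "F \<in> P" "E \<noteq> F"
  shows "nearly_disjoint E F"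
  using assms unfolding linked_partitions_def by blast

lemma linked_partition_inj_on_Min:
  assumes "P \<in> linked_partitions n"
  shows "inj_on Min P"
proof (rule inj_onI, rule ccontr)
  fix B B' assume "B \<in> P" "B' \<in> P" "Min B = Min B'" "B \<noteq> B'"
  then have "nearly_disjoint B B'" "Min B \<in> B" "Min B \<in> B'"
    using assms linked_partition_nearly_disjoint linked_partition_block(3) by metis+
  then have "Min B = Min B \<longleftrightarrow> Min B \<noteq> Min B'" by (rule nearly_disjoint_common_elem)
  with \<open>Min B = Min B'\<close> show False by simp
qed

lemma linked_partition_nonmin_block_unique:
  assumes "P \<in> linked_partitions n" "B \<in> P" "B' \<in> P"
    and "x \<in> B - {Min B}" "x \<in> B' - {Min B'}"
  shows "B = B'"
  using assms linked_partition_nearly_disjoint nearly_disjoint_common_elem by blast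

lemma linked_partition_singleton_block:
  assumes "P \<in> linked_partitions n" "{x} \<in> P" "B \<in> P" "x \<in> B"
  shows "B = {x}"
  using assms linked_partition_nearly_disjoint nearly_disjoint_singleton by blast

lemma reachable_from_0_if_increasing_parents:
  fixes n v :: nat
  assumes "\<And>c. 0 < c \<Longrightarrow> c \<le> n \<Longrightarrow> \<exists>p < c. (p, c) \<in> T"
  shows "v \<le> n \<Longrightarrow> (0, v) \<in> T\<^sup>*"
proof (induction v rule: less_induct)
  case (less v)
  show ?case
  proof (cases "v = 0")
    case False
    then obtain p where "p < v" "(p, v) \<in> T" using assms less.prems by blast
    moreover have "(0, p) \<in> T\<^sup>*" using less \<open>p < v\<close> by simp
    ultimately show ?thesis by (simp add: rtrancl_into_rtrancl)
  qed simp
qed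

text \<open>Reachability from the root is automatic once all parents are smaller than their children.\<close>
lemma increasing_trees_iff:
  "T \<in> increasing_trees n \<longleftrightarrow>
     (\<forall>(p, c)\<in>T. p < c \<and> c \<le> n) \<and> (\<forall>c\<in>{1..n}. \<exists>!p. (p, c) \<in> T)"
proof -
  have nonzero: "{0..n} - {0} = {1..n}" by auto
  show ?thesis
  proof
    assume "T \<in> increasing_trees n"
    then have tree: "rooted_tree {0..n} 0 T" and increasing: "\<forall>(p, c)\<in>T. p < c"
      unfolding increasing_trees_def by simp_all
    from tree have "T \<subseteq> {0..n} \<times> {0..n}"
      unfolding rooted_tree_def by (elim conjE)
    with increasing have "\<forall>(p, c)\<in>T. p < c \<and> c \<le> n" by fastforce
    moreover from tree have "\<forall>c\<in>{1..n}. \<exists>!p. (p, c) \<in> T"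
      unfolding rooted_tree_def nonzero by (elim conjE)
    ultimately show "(\<forall>(p, c)\<in>T. p < c \<and> c \<le> n) \<and> (\<forall>c\<in>{1..n}. \<exists>!p. (p, c) \<in> T)" ..
  next
    assume "(\<forall>(p, c)\<in>T. p < c \<and> c \<le> n) \<and> (\<forall>c\<in>{1..n}. \<exists>!p. (p, c) \<in> T)"
    then have edges: "\<And>p c. (p, c) \<in> T \<Longrightarrow> p < c \<and> c \<le> n"
      and parents: "\<forall>c\<in>{1..n}. \<exists>!p. (p, c) \<in> T"
      by blast+
    have "(0, v) \<in> T\<^sup>*" if "v \<le> n" for v
    proof (rule reachable_from_0_if_increasing_parents[OF _ that])
      fix c :: nat assume "0 < c" "c \<le> n"
      then obtain p where "(p, c) \<in> T" using parents by fastforce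
      then show "\<exists>p<c. (p, c) \<in> T" using edges by blast
    qed
    moreover have "T \<subseteq> {0..n} \<times> {0..n}" "\<And>p. (p, 0) \<notin> T"
      using edges by fastforce+
    moreover have "\<forall>(p, c)\<in>T. p < c" using edges by blast
    ultimately show "T \<in> increasing_trees n"
      using parents unfolding increasing_trees_def rooted_tree_def nonzero by simp
  qed
qed

lemma increasing_tree_edge:
  assumes "T \<in> increasing_trees n" "(p, c) \<in> T"
  shows "p < c" "c \<le> n"
  using assms unfolding increasing_trees_iff by auto

lemma increasing_tree_parent_unique:
  assumes "T \<in> increasing_trees n" "(p, c) \<in> T" "(q, c) \<in> T"
  shows "p = q"
proof -
  have "c \<in> {1..n}" using increasing_tree_edge[OF assms(1,2)] by simp
  with assms(1) have "\<exists>!p. (p, c) \<in> T" unfolding increasing_trees_iff by blast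
  with assms(2,3) show ?thesis by metis
qed

lemma increasing_tree_parent_exists:
  assumes "T \<in> increasing_trees n" "c \<in> {1..n}"
  shows "\<exists>p. (p, c) \<in> T"
  using assms unfolding increasing_trees_iff by blast

lemma increasing_tree_Min_insert_children:
  assumes "T \<in> increasing_trees n"
  shows "Min (insert v (T `` {v})) = v"
proof (rule Min_eqI)
  have "T `` {v} \<subseteq> {..n}" using increasing_tree_edge(2)[OF assms] by blast
  then show "finite (insert v (T `` {v}))" by (simp add: finite_subset)
  show "x \<in> insert v (T `` {v}) \<Longrightarrow> v \<le> x" for x
    using increasing_tree_edge(1)[OF assms, of v x] by auto
qed simp

definition tree_of_linked_partition :: "nat \<Rightarrow> nat set set \<Rightarrow> (nat \<times> nat) set" where
  "tree_of_linked_partition n P =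
     {(p, c). (\<exists>B\<in>P. p = Min B \<and> c \<in> B - {Min B}) \<or>
              (p = 0 \<and> c \<in> {1..n} - (\<Union>B\<in>P. B - {Min B}))}"

definition block_minima :: "nat \<Rightarrow> (nat \<times> nat) set \<Rightarrow> nat set" where
  "block_minima n T = {v \<in> {1..n}. T `` {v} \<noteq> {} \<or> (0, v) \<in> T}"

definition linked_partition_of_tree :: "nat \<Rightarrow> (nat \<times> nat) set \<Rightarrow> nat set set" where
  "linked_partition_of_tree n T = (\<lambda>v. insert v (T `` {v})) ` block_minima n T"

lemma mem_tree_of_linked_partition:
  "(p, c) \<in> tree_of_linked_partition n P \<longleftrightarrow>
     (\<exists>B\<in>P. p = Min B \<and> c \<in> B - {Min B}) \<or>
     (p = 0 \<and> c \<in> {1..n} \<and> (\<forall>B\<in>P. c \<notin> B - {Min B}))"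
  unfolding tree_of_linked_partition_def by blast

lemma tree_of_linked_partition_in_increasing_trees:
  assumes P: "P \<in> linked_partitions n"
  shows "tree_of_linked_partition n P \<in> increasing_trees n"
proof -
  let ?T = "tree_of_linked_partition n P"
  have increasing: "p < c \<and> c \<le> n" if "(p, c) \<in> ?T" for p c
  proof -
    from that consider B where "B \<in> P" "p = Min B" "c \<in> B - {Min B}"
      | "p = 0" "c \<in> {1..n}"
      unfolding mem_tree_of_linked_partition by blast
    then show ?thesis
    proof cases
      case 1
      then show ?thesis
        using linked_partition_block(1,2)[OF P \<open>B \<in> P\<close>] Min_le[of B c]
        by (auto simp: order.strict_iff_order)
    qed auto
  qed
  have unique_parent: "\<exists>!p. (p, c) \<in> ?T" if "c \<in> {1..n}" for c
  proof (cases "\<exists>B\<in>P. c \<in> B - {Min B}")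
    case True
    then obtain B where "B \<in> P" "c \<in> B - {Min B}" by blast
    with linked_partition_nonmin_block_unique[OF P] show ?thesis
      unfolding mem_tree_of_linked_partition by metis
  next
    case False
    with \<open>c \<in> {1..n}\<close> linked_partition_block(4)[OF P] show ?thesis
      unfolding mem_tree_of_linked_partition by metis
  qed
  from increasing unique_parent show ?thesis
    unfolding increasing_trees_iff by blast
qed

lemma block_minima_iff_nonroot_parent:
  assumes "T \<in> increasing_trees n" "(p, c) \<in> T"
  shows "p \<in> block_minima n T \<longleftrightarrow> p \<noteq> 0"
  using increasing_tree_edge[OF assms] assms(2) unfolding block_minima_def by auto

lemma block_minimum_with_nonroot_parent_has_children:
  assumes T: "T \<in> increasing_trees n" and "v \<in> block_minima n T" "(w, v) \<in> T" "w \<noteq> 0"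
  shows "T `` {v} \<noteq> {}"
proof -
  have "(0, v) \<notin> T" using increasing_tree_parent_unique[OF T assms(3)] assms(4) by blast
  with assms(2) show ?thesis unfolding block_minima_def by blast
qed

lemma increasing_tree_card_insert_children:
  assumes "T \<in> increasing_trees n" "T `` {v} \<noteq> {}"
  shows "1 < card (insert v (T `` {v}))"
proof -
  have "T `` {v} \<subseteq> {..n}" "v \<notin> T `` {v}"
    using increasing_tree_edge[OF assms(1)] by blast+
  with assms(2) show ?thesis by (simp add: card_gt_0_iff finite_subset)
qed

lemma increasing_tree_blocks_nearly_disjoint:
  assumes T: "T \<in> increasing_trees n"
    and V: "v \<in> block_minima n T" "w \<in> block_minima n T" "v \<noteq> w"
  shows "nearly_disjoint (insert v (T `` {v})) (insert w (T `` {w}))"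
  unfolding nearly_disjoint_def increasing_tree_Min_insert_children[OF T]
proof
  fix i assume i: "i \<in> insert v (T `` {v}) \<inter> insert w (T `` {w})"
  have "v \<noteq> 0" "w \<noteq> 0" using V unfolding block_minima_def by auto
  have children: "T `` {u} \<noteq> {}" if "u \<in> {v, w}" "u' \<in> {v, w}" "(u', u) \<in> T" for u u'
    using block_minimum_with_nonroot_parent_has_children[OF T] that V \<open>v \<noteq> 0\<close> \<open>w \<noteq> 0\<close>
    by blast
  consider "i = v" "(w, v) \<in> T" | "i = w" "(v, w) \<in> T" | "(v, i) \<in> T" "(w, i) \<in> T"
    using i \<open>v \<noteq> w\<close> by auto
  then show "i = v \<and> 1 < card (insert v (T `` {v})) \<and> i \<noteq> w \<or>
             i = w \<and> 1 < card (insert w (T `` {w})) \<and> i \<noteq> v"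
  proof cases
    case 1
    then show ?thesis using children increasing_tree_card_insert_children[OF T] V by blast
  next
    case 2
    then show ?thesis using children increasing_tree_card_insert_children[OF T] V by blast
  next
    case 3
    then show ?thesis using increasing_tree_parent_unique[OF T] \<open>v \<noteq> w\<close> by blast
  qed
qed

lemma linked_partition_of_tree_in_linked_partitions:
  assumes T: "T \<in> increasing_trees n"
  shows "linked_partition_of_tree n T \<in> linked_partitions n"
proof -
  let ?V = "block_minima n T"
  let ?A = "\<lambda>v. insert v (T `` {v})"
  have blocks: "?A v \<subseteq> {1..n}" if "v \<in> ?V" for v
    using that increasing_tree_edge[OF T, of v] unfolding block_minima_def by fastforce
  have cover: "c \<in> \<Union>(?A ` ?V)" if c: "c \<in> {1..n}" for c
  proof -
    obtain p where p: "(p, c) \<in> T" using increasing_tree_parent_exists[OF T c] by blast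
    show ?thesis
    proof (cases "p = 0")
      case True
      with c p have "c \<in> ?V" unfolding block_minima_def by simp
      then show ?thesis by blast
    next
      case False
      with p show ?thesis using block_minima_iff_nonroot_parent[OF T p] by blast
    qed
  qed
  show ?thesis
    unfolding linked_partitions_def linked_partition_of_tree_def
    using blocks cover increasing_tree_blocks_nearly_disjoint[OF T] by blast
qed

lemma tree_of_linked_partition_children:
  assumes P: "P \<in> linked_partitions n" and B: "B \<in> P"
  shows "tree_of_linked_partition n P `` {Min B} = B - {Min B}"
proof (intro equalityI subsetI)
  fix c assume "c \<in> tree_of_linked_partition n P `` {Min B}"
  moreover have "Min B \<noteq> 0" using linked_partition_block(4)[OF P B] .
  ultimately obtain B' where "B' \<in> P" "Min B = Min B'" "c \<in> B' - {Min B'}"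
    by (auto simp: mem_tree_of_linked_partition)
  moreover from this have "B' = B"
    using inj_onD[OF linked_partition_inj_on_Min[OF P]] B by metis
  ultimately show "c \<in> B - {Min B}" by simp
next
  fix c assume "c \<in> B - {Min B}"
  with B show "c \<in> tree_of_linked_partition n P `` {Min B}"
    by (auto simp: mem_tree_of_linked_partition)
qed

lemma tree_of_linked_partition_root_edge:
  assumes P: "P \<in> linked_partitions n" and "{v} \<in> P"
  shows "(0, v) \<in> tree_of_linked_partition n P"
proof -
  have "v \<notin> B - {Min B}" if "B \<in> P" for B
  proof
    assume "v \<in> B - {Min B}"
    moreover from this have "B = {v}"
      using linked_partition_singleton_block[OF P \<open>{v} \<in> P\<close> that] by blast
    ultimately show False by simp
  qed
  moreover have "v \<in> {1..n}" using linked_partition_block(2)[OF P \<open>{v} \<in> P\<close>] by simp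
  ultimately show ?thesis unfolding mem_tree_of_linked_partition by blast
qed

lemma block_minima_tree_of_linked_partition:
  assumes P: "P \<in> linked_partitions n"
  shows "block_minima n (tree_of_linked_partition n P) = Min ` P"
    (is "block_minima n ?T = _")
proof (intro equalityI subsetI)
  fix v assume "v \<in> block_minima n ?T"
  then have "v \<in> {1..n}" and "(\<exists>c. (v, c) \<in> ?T) \<or> (0, v) \<in> ?T"
    unfolding block_minima_def by auto
  then show "v \<in> Min ` P"
  proof (elim disjE exE)
    fix c assume "(v, c) \<in> ?T"
    with \<open>v \<in> {1..n}\<close> show ?thesis by (auto simp: mem_tree_of_linked_partition)
  next
    assume "(0, v) \<in> ?T"
    obtain B where B: "B \<in> P" "v \<in> B"
      using \<open>v \<in> {1..n}\<close> P unfolding linked_partitions_def by blast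
    with \<open>(0, v) \<in> ?T\<close> have "v = Min B"
      using linked_partition_block(4)[OF P] by (auto simp: mem_tree_of_linked_partition)
    with B show ?thesis by blast
  qed
next
  fix v assume "v \<in> Min ` P"
  then obtain B where B: "B \<in> P" "Min B = v" by blast
  have "v \<in> {1..n}" "v \<in> B" using linked_partition_block[OF P B(1)] B(2) by auto
  moreover have "?T `` {v} \<noteq> {} \<or> (0, v) \<in> ?T"
  proof (cases "B = {v}")
    case True
    with B(1) show ?thesis using tree_of_linked_partition_root_edge[OF P] by simp
  next
    case False
    with \<open>v \<in> B\<close> have "B - {Min B} \<noteq> {}" using B(2) by blast
    with B show ?thesis using tree_of_linked_partition_children[OF P B(1)] by simp
  qed
  ultimately show "v \<in> block_minima n ?T" unfolding block_minima_def by simp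
qed

lemma linked_partition_of_tree_of_linked_partition:
  assumes P: "P \<in> linked_partitions n"
  shows "linked_partition_of_tree n (tree_of_linked_partition n P) = P"
proof -
  let ?T = "tree_of_linked_partition n P"
  have "linked_partition_of_tree n ?T = (\<lambda>B. insert (Min B) (?T `` {Min B})) ` P"
    unfolding linked_partition_of_tree_def block_minima_tree_of_linked_partition[OF P]
      image_image ..
  also have "\<dots> = (\<lambda>B. B) ` P"
    using tree_of_linked_partition_children[OF P] linked_partition_block(3)[OF P]
    by (intro image_cong) (simp_all add: insert_absorb)
  finally show ?thesis by simp
qed

lemma tree_of_linked_partition_of_tree:
  assumes T: "T \<in> increasing_trees n"
  shows "tree_of_linked_partition n (linked_partition_of_tree n T) = T"
proof -
  let ?V = "block_minima n T"
  have no_loop: "(v, v) \<notin> T" for v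
    using increasing_tree_edge(1)[OF T] by blast
  have "(p, c) \<in> tree_of_linked_partition n (linked_partition_of_tree n T) \<longleftrightarrow>
      (p \<in> ?V \<and> (p, c) \<in> T) \<or> (p = 0 \<and> c \<in> {1..n} \<and> (\<forall>q\<in>?V. (q, c) \<notin> T))" for p c
    unfolding mem_tree_of_linked_partition linked_partition_of_tree_def
    by (auto simp: increasing_tree_Min_insert_children[OF T] no_loop)
  also have "\<dots> p c \<longleftrightarrow> (p, c) \<in> T" for p c
  proof
    assume "(p \<in> ?V \<and> (p, c) \<in> T) \<or> (p = 0 \<and> c \<in> {1..n} \<and> (\<forall>q\<in>?V. (q, c) \<notin> T))"
    then show "(p, c) \<in> T"
    proof
      assume root: "p = 0 \<and> c \<in> {1..n} \<and> (\<forall>q\<in>?V. (q, c) \<notin> T)"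
      then obtain q where "(q, c) \<in> T" using increasing_tree_parent_exists[OF T] by blast
      with root show ?thesis using block_minima_iff_nonroot_parent[OF T] by metis
    qed blast
  next
    assume pc: "(p, c) \<in> T"
    show "(p \<in> ?V \<and> (p, c) \<in> T) \<or> (p = 0 \<and> c \<in> {1..n} \<and> (\<forall>q\<in>?V. (q, c) \<notin> T))"
    proof (cases "p = 0")
      case True
      have "c \<in> {1..n}" using increasing_tree_edge[OF T pc] True by simp
      moreover have "(q, c) \<notin> T" if "q \<in> ?V" for q
        using increasing_tree_parent_unique[OF T pc] block_minima_iff_nonroot_parent[OF T]
          that True by blast
      ultimately show ?thesis using True by blast
    qed (use pc block_minima_iff_nonroot_parent[OF T pc] in blast)
  qed
  finally show ?thesis by auto
qed

theorem theorem3p2: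
  fixes n :: nat
  assumes "n \<ge> 1"
  shows "\<exists>f. bij_betw f (linked_partitions n) (increasing_trees n)"
proof
  show "bij_betw (tree_of_linked_partition n) (linked_partitions n) (increasing_trees n)"
  proof (rule bij_betw_byWitness[where f' = "linked_partition_of_tree n"])
    show "\<forall>P\<in>linked_partitions n. linked_partition_of_tree n (tree_of_linked_partition n P) = P"
      using linked_partition_of_tree_of_linked_partition by blast
    show "\<forall>T\<in>increasing_trees n. tree_of_linked_partition n (linked_partition_of_tree n T) = T"
      using tree_of_linked_partition_of_tree by blast
    show "tree_of_linked_partition n ` linked_partitions n \<subseteq> increasing_trees n"
      using tree_of_linked_partition_in_increasing_trees by blast
    show "linked_partition_of_tree n ` increasing_trees n \<subseteq> linked_partitions n"
      using linked_partition_of_tree_in_linked_partitions by blast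
  qed
qed

end
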